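(* Let $R$ be a ring with identity and $a,b,c,\alpha\in R$ such that $a$ has a $(b,c)$-inverse $a^\otimes$. The following are equivalent: (i) $\alpha$ is right $(b,c)$-invertible; (ii) $\alpha$ is left annihilator $(b,c)$-invertible; (iii) $1+(\alpha-a)a^\otimes$ is right invertible; (iv) $1+a^\otimes(\alpha-a)$ is right invertible.
   Context: For $x\in R$: $xR=\{xr:r\in R\}$, $Rx=\{rx:r\in R\}$, ${}^\circ x=\{r: rx=0\}$. $a$ is $(b,c)$-invertible if there is $y\in R$ with $y\in (bRy)\cap(yRc)$, $yab=b$, $cay=c$; such $y$ is unique, denoted $a^\otimes$. $\alpha$ is right $(b,c)$-invertible if there is $y$ with $yR\subseteq bR$ and $c\alpha y=c$; left annihilator $(b,c)$-invertible if there is $y$ with ${}^\circ b\subseteq {}^\circ y$ and $c\alpha y=c$. *)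

theory Defs
  imports Main
begin

definition left_ann :: "'a::ring_1 \<Rightarrow> 'a set" where
  "left_ann x = {r. r * x = 0}"

definition is_bc_inverse :: "'a::ring_1 \<Rightarrow> 'a \<Rightarrow> 'a \<Rightarrow> 'a \<Rightarrow> bool" where
  "is_bc_inverse a b c y \<longleftrightarrow>
     (\<exists>r. y = b * r * y) \<and> (\<exists>s. y = y * s * c) \<and> y * a * b = b \<and> c * a * y = c"

definition bc_invertible :: "'a::ring_1 \<Rightarrow> 'a \<Rightarrow> 'a \<Rightarrow> bool" where
  "bc_invertible a b c \<longleftrightarrow> (\<exists>y. is_bc_inverse a b c y)"

definition bc_inv :: "'a::ring_1 \<Rightarrow> 'a \<Rightarrow> 'a \<Rightarrow> 'a" where
  "bc_inv a b c = (THE y. is_bc_inverse a b c y)"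

definition right_bc_invertible :: "'a::ring_1 \<Rightarrow> 'a \<Rightarrow> 'a \<Rightarrow> bool" where
  "right_bc_invertible \<alpha> b c \<longleftrightarrow>
     (\<exists>y. {y * r | r. True} \<subseteq> {b * r | r. True} \<and> c * \<alpha> * y = c)"

definition left_ann_bc_invertible :: "'a::ring_1 \<Rightarrow> 'a \<Rightarrow> 'a \<Rightarrow> bool" where
  "left_ann_bc_invertible \<alpha> b c \<longleftrightarrow>
     (\<exists>y. left_ann b \<subseteq> left_ann y \<and> c * \<alpha> * y = c)"

definition right_invertible :: "'a::ring_1 \<Rightarrow> bool" where
  "right_invertible x \<longleftrightarrow> (\<exists>z. x * z = 1)"

end

theory Submission
  imports Defs
begin

text \<open>With \<open>y = a\<^sup>\<otimes>\<close>, the element \<open>b\<close> is von Neumann regular, so membership in \<open>bR\<close>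
  is detected by left annihilators; this makes (i) and (ii) both say that some \<open>z \<in> bR\<close>
  satisfies \<open>c\<alpha>z = c\<close>. Such a \<open>z\<close> is fixed by \<open>ya\<close> and satisfies \<open>y\<alpha>z = y\<close>, whence
  \<open>1 - (\<alpha> - a)z\<close> is a right inverse of \<open>1 + (\<alpha> - a)y\<close>; conversely, for a right inverse \<open>w\<close>
  of \<open>1 + (\<alpha> - a)y\<close> the element \<open>z = yw\<close> works, since \<open>c(1 + (\<alpha> - a)y) = c\<alpha>y\<close>.
  Finally (iii) and (iv) are equivalent by Jacobson's lemma.\<close>

lemma is_bc_inverse_unique:
  fixes a b c :: "'a::ring_1"
  assumes "is_bc_inverse a b c y1" "is_bc_inverse a b c y2"
  shows "y1 = y2"
proof -
  obtain s1 where s1: "y1 = y1 * s1 * c" and b1: "y1 * a * b = b"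
    using assms(1) unfolding is_bc_inverse_def by blast
  obtain r2 where r2: "y2 = b * r2 * y2" and c2: "c * a * y2 = c"
    using assms(2) unfolding is_bc_inverse_def by blast
  have "y1 = (y1 * s1 * c) * a * y2"
    using s1 c2 by (metis mult.assoc)
  also have "\<dots> = y1 * a * y2"
    using s1 by simp
  also have "\<dots> = y1 * a * b * r2 * y2"
    using r2 by (metis mult.assoc)
  also have "\<dots> = y2"
    using b1 r2 by simp
  finally show ?thesis .
qed

lemma bc_inv_eqI:
  fixes a b c :: "'a::ring_1"
  assumes "is_bc_inverse a b c y"
  shows "bc_inv a b c = y"
  unfolding bc_inv_def using assms is_bc_inverse_unique by (metis the_equality)

lemma is_bc_inverse_regular:
  fixes a b c :: "'a::ring_1"
  assumes "is_bc_inverse a b c y"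
  obtains g where "b = b * g * b"
proof -
  obtain r where r: "y = b * r * y" and yab: "y * a * b = b"
    using assms unfolding is_bc_inverse_def by blast
  have "b = b * r * (y * a * b)"
    using r yab by (metis mult.assoc)
  then have "b = b * (r * y * a) * b"
    using yab by (simp add: mult.assoc)
  then show ?thesis by (rule that)
qed

lemma principal_right_ideal_subset_iff:
  fixes b z :: "'a::monoid_mult"
  shows "{z * r | r. True} \<subseteq> {b * r | r. True} \<longleftrightarrow> (\<exists>t. z = b * t)"
proof
  assume "{z * r | r. True} \<subseteq> {b * r | r. True}"
  then have "z * 1 \<in> {b * r | r. True}" by blast
  then show "\<exists>t. z = b * t" by auto
next
  assume "\<exists>t. z = b * t"
  then show "{z * r | r. True} \<subseteq> {b * r | r. True}"
    by (auto simp: mult.assoc)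
qed

lemma left_ann_subset_iff_right_multiple:
  fixes b z :: "'a::ring_1"
  assumes regular: "b = b * g * b"
  shows "left_ann b \<subseteq> left_ann z \<longleftrightarrow> (\<exists>t. z = b * t)"
proof
  assume ann: "left_ann b \<subseteq> left_ann z"
  have "(1 - b * g) * b = 0"
    using regular by (simp add: algebra_simps)
  then have "(1 - b * g) * z = 0"
    using ann unfolding left_ann_def by blast
  then have "z = b * (g * z)"
    by (simp add: algebra_simps)
  then show "\<exists>t. z = b * t" ..
next
  assume "\<exists>t. z = b * t"
  then show "left_ann b \<subseteq> left_ann z"
    unfolding left_ann_def by (auto simp: mult.assoc[symmetric])
qed

lemma right_bc_invertible_iff:
  "right_bc_invertible \<alpha> b c \<longleftrightarrow> (\<exists>t. c * \<alpha> * (b * t) = c)"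
  unfolding right_bc_invertible_def principal_right_ideal_subset_iff by auto

lemma left_ann_bc_invertible_iff:
  fixes \<alpha> b c :: "'a::ring_1"
  assumes "b = b * g * b"
  shows "left_ann_bc_invertible \<alpha> b c \<longleftrightarrow> (\<exists>t. c * \<alpha> * (b * t) = c)"
  unfolding left_ann_bc_invertible_def left_ann_subset_iff_right_multiple[OF assms] by auto

lemma right_invertible_one_plus_commute:
  fixes u v :: "'a::ring_1"
  assumes "right_invertible (1 + u * v)"
  shows "right_invertible (1 + v * u)"
proof -
  obtain w where w: "(1 + u * v) * w = 1"
    using assms unfolding right_invertible_def by blast
  have "(1 + v * u) * (1 - v * w * u) = 1 + v * u - v * ((1 + u * v) * w) * u"
    by (simp add: algebra_simps)
  also have "\<dots> = 1"
    using w by simp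
  finally show ?thesis
    unfolding right_invertible_def by blast
qed

lemma right_invertible_one_plus_commute_iff:
  fixes u v :: "'a::ring_1"
  shows "right_invertible (1 + u * v) \<longleftrightarrow> right_invertible (1 + v * u)"
  using right_invertible_one_plus_commute by blast

lemma right_invertible_perturbation_if_solution:
  fixes a b c \<alpha> :: "'a::ring_1"
  assumes y: "is_bc_inverse a b c y" and sol: "c * \<alpha> * (b * t) = c"
  shows "right_invertible (1 + (\<alpha> - a) * y)"
proof -
  obtain s where s: "y = y * s * c" and yab: "y * a * b = b"
    using y unfolding is_bc_inverse_def by blast
  define z where "z = b * t"
  have yaz: "y * a * z = z"
    unfolding z_def using yab by (metis mult.assoc)
  have "y * \<alpha> * z = y * s * (c * \<alpha> * z)"
    using s by (metis mult.assoc)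
  then have y\<alpha>z: "y * \<alpha> * z = y"
    using sol s unfolding z_def by simp
  have "(1 + (\<alpha> - a) * y) * (1 - (\<alpha> - a) * z) =
        1 - (\<alpha> - a) * z + (\<alpha> - a) * y - (\<alpha> - a) * (y * \<alpha> * z - y * a * z)"
    by (simp add: algebra_simps)
  also have "\<dots> = 1"
    using yaz y\<alpha>z by (simp add: algebra_simps)
  finally show ?thesis
    unfolding right_invertible_def by blast
qed

lemma solution_if_right_invertible_perturbation:
  fixes a b c \<alpha> :: "'a::ring_1"
  assumes y: "is_bc_inverse a b c y" and inv: "right_invertible (1 + (\<alpha> - a) * y)"
  shows "\<exists>t. c * \<alpha> * (b * t) = c"
proof -
  obtain r where r: "y = b * r * y" and cay: "c * a * y = c"
    using y unfolding is_bc_inverse_def by blast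
  obtain w where w: "(1 + (\<alpha> - a) * y) * w = 1"
    using inv unfolding right_invertible_def by blast
  have "c * (1 + (\<alpha> - a) * y) = c * \<alpha> * y"
    using cay by (simp add: algebra_simps)
  then have "c * \<alpha> * (y * w) = c"
    using w by (metis mult.assoc mult_1_right)
  then have "c * \<alpha> * (b * (r * y * w)) = c"
    using r by (metis mult.assoc)
  then show ?thesis ..
qed

theorem theorem4p3:
  fixes a b c \<alpha> :: "'a::ring_1"
  assumes "bc_invertible a b c"
  shows "(right_bc_invertible \<alpha> b c \<longleftrightarrow> left_ann_bc_invertible \<alpha> b c)
       \<and> (left_ann_bc_invertible \<alpha> b c \<longleftrightarrow> right_invertible (1 + (\<alpha> - a) * bc_inv a b c))
       \<and> (right_invertible (1 + (\<alpha> - a) * bc_inv a b c) \<longleftrightarrow> right_invertible (1 + bc_inv a b c * (\<alpha> - a)))"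
proof -
  obtain y where y: "is_bc_inverse a b c y"
    using assms unfolding bc_invertible_def by blast
  obtain g where g: "b = b * g * b"
    using is_bc_inverse_regular[OF y] .
  have "left_ann_bc_invertible \<alpha> b c \<longleftrightarrow> right_invertible (1 + (\<alpha> - a) * y)"
    unfolding left_ann_bc_invertible_iff[OF g]
    using right_invertible_perturbation_if_solution[OF y]
      solution_if_right_invertible_perturbation[OF y] by blast
  then show ?thesis
    unfolding bc_inv_eqI[OF y] right_bc_invertible_iff left_ann_bc_invertible_iff[OF g]
    using right_invertible_one_plus_commute_iff by blast
qed

end
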